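(* Let $n\ge 5$. If $x\in\mathrm{Sort}_n(123,321)$, then $\mathrm{ind}_x(n)<\min(\mathrm{ind}_x(1),\mathrm{ind}_x(2))$, i.e. $n$ appears to the left of both $1$ and $2$ in $x$.
   Context: $\mathrm{ind}_x(a)$ is the position of the value $a$ in $x$. A permutation contains a pattern $p$ if it has a subsequence order-isomorphic to $p$; otherwise it avoids $p$. For a set $T$ of patterns, the map $s_T$ is defined as follows: the entries of the input permutation are read from left to right, with an initially empty stack. At each step, if the input is nonempty and pushing the next input entry onto the stack produces a stack whose contents, read from top to bottom, avoid every pattern in $T$, that entry is pushed; otherwise the top entry of the stack is popped and appended to the output. When the input is exhausted, the remaining stack entries are popped one at a time to the output. Write $s_{\sigma,\tau}=s_{\{\sigma,\tau\}}$ and $s=s_{\{21\}}$ (West's stack-sorting map). $\mathrm{Sort}_n(\sigma,\tau)$ is the set of $x\in S_n$ with $s(s_{\sigma,\tau}(x))=12\cdots n$. *)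

theory Defs
  imports Main "HOL-Library.Sublist"
begin

definition is_perm :: "nat \<Rightarrow> nat list \<Rightarrow> bool" where
  "is_perm n x \<longleftrightarrow> distinct x \<and> set x = {1..n}"

definition ind :: "nat list \<Rightarrow> nat \<Rightarrow> nat" where
  "ind x a = (THE i. i < length x \<and> x ! i = a)"

definition contains :: "nat list \<Rightarrow> nat list \<Rightarrow> bool" where
  "contains w p \<longleftrightarrow> (\<exists>ys. subseq ys w \<and> length ys = length p \<and>
      (\<forall>i<length p. \<forall>j<length p. ys ! i < ys ! j \<longleftrightarrow> p ! i < p ! j))"

definition avoids_all :: "nat list list \<Rightarrow> nat list \<Rightarrow> bool" where
  "avoids_all T w \<longleftrightarrow> (\<forall>p\<in>set T. \<not> contains w p)"

text \<open>Arguments: patterns T, remaining input,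
  stack (head = top, so the list reads the stack top to bottom).
  The case "push forbidden but stack empty" cannot occur when every pattern has
  length at least 2; there we push anyway (arbitrary convention, irrelevant here).\<close>
function stk :: "nat list list \<Rightarrow> nat list \<Rightarrow> nat list \<Rightarrow> nat list" where
  "stk T [] st = st"
| "stk T (a # inp) st =
     (if avoids_all T (a # st) then stk T inp (a # st)
      else (case st of [] \<Rightarrow> stk T inp [a]
                     | b # st' \<Rightarrow> b # stk T (a # inp) st'))"
  by pat_completeness auto
termination
  by (relation "measure (\<lambda>(T, inp, st). 2 * length inp + length st)") auto

definition sT :: "nat list list \<Rightarrow> nat list \<Rightarrow> nat list" where
  "sT T x = stk T x []"

definition west :: "nat list \<Rightarrow> nat list" where
  "west x = sT [[2,1]] x"

definition Sort :: "nat \<Rightarrow> nat list \<Rightarrow> nat list \<Rightarrow> nat list set" where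
  "Sort n \<sigma> \<tau> = {x. is_perm n x \<and> west (sT [\<sigma>, \<tau>] x) = [1..<n+1]}"

end

theory Submission
  imports Defs "HOL-Library.Multiset"
begin

text \<open>
  Let y = s_{123,321}(x). As s(y) is the identity, y avoids 231, so it suffices to find a 231 in y
  whenever 1 or 2 precedes n in x. The order of two entries in y is read off the stack: an
  earlier entry leaves after a later one iff it is still in the stack when the later one is
  pushed. Since the stack avoids 123 and 321, at most two entries lie below n, increasing
  downwards, and at most two below a left-to-right minimum m, decreasing downwards.

  Let m be the least of 1, 2 that lies to the left of n; it is a left-to-right minimum. If m is
  popped before n is pushed, the entry that pops m also pops the upper u1 of the two entries
  u1 > u2 below it, while u2 stays at the bottom for good; so u1 n u2 is a 231 in y. Otherwise m
  lies below n. If n is never popped, every entry other than the two below n precedes n in y, and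
  one of them, e with m < e < n, gives the 231 e n m. If n is popped, it is popped by 1 and 2 lies
  directly below n. Every other entry before 1 in x would precede n in y and form a 231 with n
  and 1, so 1 is among the first four entries. As n \<ge> 5, the entry c after 1 exists; it exceeds
  2 and is pushed onto 1 after 2 has left the stack, so 2 c 1 is a 231.
\<close>

section \<open>Subsequences of length two and three\<close>

lemma subseq_pair_append_iff:
  "subseq [u, v] (A @ B) \<longleftrightarrow> subseq [u, v] A \<or> (u \<in> set A \<and> v \<in> set B) \<or> subseq [u, v] B"
proof -
  have "subseq [u, v] (A @ B)" if "u \<in> set A" "v \<in> set B"
    using list_emb_append_mono[of "(=)" "[u]" A "[v]" B] that by (simp add: subseq_singleton_left)
  then show ?thesis
    by (auto simp: subseq_append_iff Cons_eq_append_conv subseq_singleton_left)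
qed

lemma subseq_pair_iff_nth:
  "subseq [u, v] w \<longleftrightarrow> (\<exists>i j. i < j \<and> j < length w \<and> w ! i = u \<and> w ! j = v)"
proof
  show "subseq [u, v] w \<Longrightarrow> \<exists>i j. i < j \<and> j < length w \<and> w ! i = u \<and> w ! j = v"
  proof (induction w)
    case (Cons a w)
    show ?case
    proof (cases "u = a")
      case True
      then obtain j where "j < length w" "w ! j = v"
        using Cons.prems by (auto simp: subseq_singleton_left in_set_conv_nth)
      then show ?thesis using True by (intro exI[of _ 0] exI[of _ "Suc j"]) auto
    next
      case False
      then obtain i j where "i < j \<and> j < length w \<and> w ! i = u \<and> w ! j = v"
        using Cons by auto
      then show ?thesis by (intro exI[of _ "Suc i"] exI[of _ "Suc j"]) auto
    qed
  qed simp
next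
  assume "\<exists>i j. i < j \<and> j < length w \<and> w ! i = u \<and> w ! j = v"
  then obtain i j where ij: "i < j" "j < length w" "w ! i = u" "w ! j = v" by blast
  have "take j w ! i = u" "drop j w ! 0 = v"
    using ij by auto
  then have "u \<in> set (take j w)" "v \<in> set (drop j w)"
    using ij by (metis length_take min.absorb4 nth_mem, metis length_drop nth_mem zero_less_diff)
  then show "subseq [u, v] w"
    using subseq_pair_append_iff[of u v "take j w" "drop j w"] by simp
qed

lemma subseq_pair_Cons_iff: "subseq [v, t] (a # w) \<longleftrightarrow> (v = a \<and> t \<in> set w) \<or> subseq [v, t] w"
  by (auto simp: subseq_singleton_left dest: subseq_Cons')

lemma subseq_pair_set: "subseq [u, v] w \<Longrightarrow> u \<in> set w \<and> v \<in> set w"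
proof -
  assume uv: "subseq [u, v] w"
  have "subseq [u] w"
    using subseq_order.order_trans[of "[u]" "[u, v]" w] uv by simp
  moreover have "subseq [v] w"
    using subseq_Cons' uv .
  ultimately show ?thesis
    by (simp add: subseq_singleton_left)
qed

lemma subseq_pair_short: "subseq [v, t] w \<Longrightarrow> length w \<le> 2 \<Longrightarrow> w = [v, t]"
  by (metis list_emb_length le_antisym length_Cons list.size(3) numeral_2_eq_2 subseq_same_length)

lemma subseq_pair_sorted_wrt: "sorted_wrt R w \<Longrightarrow> subseq [u, v] w \<Longrightarrow> R u v"
  by (auto simp: subseq_pair_iff_nth sorted_wrt_iff_nth_less)

lemma subseq_triple_Cons_iff:
  "subseq [u, v, t] (a # w) \<longleftrightarrow> (u = a \<and> subseq [v, t] w) \<or> subseq [u, v, t] w"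
  by (auto dest: subseq_Cons')

lemma subseq_triple_of_pairs:
  "distinct w \<Longrightarrow> subseq [u, v] w \<Longrightarrow> subseq [v, t] w \<Longrightarrow> subseq [u, v, t] w"
proof (induction w)
  case (Cons a w)
  show ?case
  proof (cases "u = a")
    case True
    then have "v \<in> set w"
      using Cons.prems(2) subseq_pair_Cons_iff[of u v a w] subseq_pair_set[of u v w] by auto
    then have "subseq [v, t] w"
      using Cons.prems(1,3) subseq_pair_Cons_iff[of v t a w] by auto
    then show ?thesis
      using True by simp
  next
    case False
    then have "subseq [u, v] w"
      using Cons.prems(2) subseq_pair_Cons_iff[of u v a w] by simp
    then have "v \<noteq> a"
      using Cons.prems(1) subseq_pair_set[of u v w] by auto
    then have "subseq [v, t] w"
      using Cons.prems(3) subseq_pair_Cons_iff[of v t a w] by simp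
    moreover have "distinct w"
      using Cons.prems(1) by simp
    ultimately have "subseq [u, v, t] w"
      using Cons.IH \<open>subseq [u, v] w\<close> by blast
    then show ?thesis
      by (rule list_emb_Cons)
  qed
next
  case Nil
  then show ?case by simp
qed

lemma subseq_triple_iff_pairs:
  assumes "distinct w"
  shows "subseq [u, v, t] w \<longleftrightarrow> subseq [u, v] w \<and> subseq [v, t] w"
proof
  assume uvt: "subseq [u, v, t] w"
  have "subseq [u, v] w"
    by (rule subseq_order.order_trans[OF _ uvt]) simp
  moreover have "subseq [v, t] w"
    by (rule subseq_order.order_trans[OF _ uvt]) simp
  ultimately show "subseq [u, v] w \<and> subseq [v, t] w" ..
next
  assume "subseq [u, v] w \<and> subseq [v, t] w"
  then show "subseq [u, v, t] w"
    using subseq_triple_of_pairs[OF assms] by blast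
qed

lemma contains_pair:
  "contains w [p0, p1] \<longleftrightarrow>
     (\<exists>u v. subseq [u, v] w \<and> (u < v \<longleftrightarrow> p0 < p1) \<and> (v < u \<longleftrightarrow> p1 < p0))"
  unfolding contains_def
  by (auto simp: length_Suc_conv numeral_2_eq_2 less_Suc_eq all_conj_distrib)
    (metis less_asym order.irrefl)+

lemma contains_triple:
  "contains w [p0, p1, p2] \<longleftrightarrow> (\<exists>u v t. subseq [u, v, t] w \<and>
     (u < v \<longleftrightarrow> p0 < p1) \<and> (v < u \<longleftrightarrow> p1 < p0) \<and> (u < t \<longleftrightarrow> p0 < p2) \<and>
     (t < u \<longleftrightarrow> p2 < p0) \<and> (v < t \<longleftrightarrow> p1 < p2) \<and> (t < v \<longleftrightarrow> p2 < p1))"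
    (is "_ \<longleftrightarrow> (\<exists>u v t. subseq [u, v, t] w \<and> ?iso u v t)")
proof
  assume "contains w [p0, p1, p2]"
  then obtain ys where ys: "subseq ys w" "length ys = 3"
    and iso: "\<forall>i<3. \<forall>j<3. ys ! i < ys ! j \<longleftrightarrow> [p0, p1, p2] ! i < [p0, p1, p2] ! j"
    unfolding contains_def by auto
  then obtain u v t where "ys = [u, v, t]"
    by (auto simp: length_Suc_conv numeral_3_eq_3)
  then show "\<exists>u v t. subseq [u, v, t] w \<and> ?iso u v t"
    using ys(1) iso[rule_format, of 0 1] iso[rule_format, of 1 0] iso[rule_format, of 0 2]
      iso[rule_format, of 2 0] iso[rule_format, of 1 2] iso[rule_format, of 2 1]
    by auto
next
  assume "\<exists>u v t. subseq [u, v, t] w \<and> ?iso u v t"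
  then obtain u v t where "subseq [u, v, t] w" "?iso u v t" by blast
  then show "contains w [p0, p1, p2]"
    unfolding contains_def
    by (intro exI[of _ "[u, v, t]"]) (auto simp: numeral_3_eq_3 less_Suc_eq)
qed

lemma contains_123: "contains w [1, 2, 3] \<longleftrightarrow> (\<exists>u v t. subseq [u, v, t] w \<and> u < v \<and> v < t)"
  unfolding contains_triple by (simp; meson less_asym less_trans)

lemma contains_321: "contains w [3, 2, 1] \<longleftrightarrow> (\<exists>u v t. subseq [u, v, t] w \<and> t < v \<and> v < u)"
  unfolding contains_triple by (simp; meson less_asym less_trans)

lemma contains_231: "contains w [2, 3, 1] \<longleftrightarrow> (\<exists>b c a. subseq [b, c, a] w \<and> a < b \<and> b < c)"
  unfolding contains_triple by (simp; meson less_asym less_trans)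

section \<open>The stack of a pattern-avoiding stack map\<close>

lemma first_failure_after:
  fixes q p :: nat
  assumes "P q" "\<not> P p" "q \<le> p"
  obtains j where "q < j" "j \<le> p" "\<not> P j" "\<And>i. q \<le> i \<Longrightarrow> i < j \<Longrightarrow> P i"
proof -
  obtain k where k: "k \<le> p - q" "\<forall>i<k. P (q + i)" "\<not> P (q + k)"
    using ex_least_nat_le[of "\<lambda>k. \<not> P (q + k)" "p - q"] assms(2,3) by auto
  have "0 < k"
    using k(3) assms(1) by (cases k) auto
  moreover have "P i" if "q \<le> i" "i < q + k" for i
    using k(2) that by (metis add_diff_inverse_nat add_less_cancel_left not_less)
  ultimately show ?thesis
    using that[of "q + k"] k(1,3) assms(3) by auto
qed

fun pops :: "nat list list \<Rightarrow> nat \<Rightarrow> nat list \<Rightarrow> nat" where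
  "pops T a [] = 0"
| "pops T a (b # st) = (if avoids_all T (a # b # st) then 0 else Suc (pops T a st))"

lemma stk_Cons_pops:
  "stk T (a # inp) st = take (pops T a st) st @ stk T inp (a # drop (pops T a st) st)"
  by (induction st) auto

lemma pops_eq_0: "avoids_all T (a # st) \<Longrightarrow> pops T a st = 0"
  by (cases st) auto

lemma mset_stk: "mset (stk T inp st) = mset inp + mset st"
proof (induction inp arbitrary: st)
  case (Cons a inp)
  have "mset st = mset (take (pops T a st) st) + mset (drop (pops T a st) st)"
    by (metis append_take_drop_id mset_append)
  then show ?case by (subst stk_Cons_pops) (simp add: Cons.IH ac_simps)
qed simp

lemma set_stk: "set (stk T inp st) = set inp \<union> set st"
  by (metis mset_stk set_mset_mset set_mset_union)

lemma distinct_stk: "distinct (inp @ st) \<Longrightarrow> distinct (stk T inp st)"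
  by (metis mset_stk mset_append mset_eq_imp_distinct_iff union_commute)

text \<open>The stack, top first, right after x ! j has been pushed, starting from the stack st.\<close>

fun stack_after :: "nat list list \<Rightarrow> nat list \<Rightarrow> nat list \<Rightarrow> nat \<Rightarrow> nat list" where
  "stack_after T [] st j = st"
| "stack_after T (a # inp) st 0 = a # drop (pops T a st) st"
| "stack_after T (a # inp) st (Suc j) = stack_after T inp (a # drop (pops T a st) st) j"

lemma stack_after_Suc:
  "Suc j < length x \<Longrightarrow> stack_after T x st (Suc j) =
     x ! Suc j # drop (pops T (x ! Suc j) (stack_after T x st j)) (stack_after T x st j)"
proof (induction x arbitrary: st j)
  case (Cons a inp)
  show ?case
  proof (cases j)
    case 0
    then show ?thesis using Cons.prems by (cases inp) auto
  next
    case (Suc j')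
    then show ?thesis using Cons by auto
  qed
qed simp

lemma stack_after_top: "j < length x \<Longrightarrow> stack_after T x st j = x ! j # tl (stack_after T x st j)"
proof (induction x arbitrary: st j)
  case (Cons a inp)
  then show ?case by (cases j) auto
qed simp

lemma set_stack_after:
  "j < length x \<Longrightarrow> set (stack_after T x st j) \<subseteq> set st \<union> set (take (Suc j) x)"
proof (induction x arbitrary: st j)
  case (Cons a inp)
  then show ?case by (cases j) (fastforce dest: in_set_dropD)+
qed simp

lemma distinct_stack_after:
  "distinct (x @ st) \<Longrightarrow> j < length x \<Longrightarrow> distinct (stack_after T x st j)"
proof (induction x arbitrary: st j)
  case (Cons a inp)
  then have "distinct (inp @ a # drop (pops T a st) st)"
    by (auto dest: in_set_dropD simp: distinct_drop)
  with Cons show ?case by (cases j) auto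
qed simp

lemma subseq_stk_of_stack: "subseq [u, v] st \<Longrightarrow> subseq [u, v] (stk T inp st)"
proof (induction inp arbitrary: st)
  case (Cons a inp)
  define k where "k = pops T a st"
  have "subseq [u, v] (take k st @ drop k st)"
    using Cons.prems by simp
  then consider "subseq [u, v] (take k st)" | "u \<in> set (take k st)" "v \<in> set (drop k st)"
    | "subseq [u, v] (a # drop k st)"
    unfolding subseq_pair_append_iff by (metis list_emb_Cons)
  then show ?case
    unfolding stk_Cons_pops[of T a inp st, folded k_def]
    by cases (auto simp: subseq_pair_append_iff set_stk Cons.IH)
qed simp

lemma stk_order_kept_stack_entry:
  "distinct (x @ st) \<Longrightarrow> j < length x \<Longrightarrow> e \<in> set st \<Longrightarrow> e \<in> set (stack_after T x st j)
    \<Longrightarrow> subseq [x ! j, e] (stk T x st)"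
proof (induction x arbitrary: st j)
  case (Cons a inp)
  define st' where "st' = a # drop (pops T a st) st"
  have out: "stk T (a # inp) st = take (pops T a st) st @ stk T inp st'"
    unfolding st'_def by (rule stk_Cons_pops)
  have dist: "distinct (inp @ st')"
    using Cons.prems(1) unfolding st'_def by (auto dest: in_set_dropD simp: distinct_drop)
  show ?case
  proof (cases j)
    case 0
    then have "subseq [a, e] st'"
      using Cons.prems by (auto simp: st'_def subseq_singleton_left)
    then show ?thesis
      using 0 out subseq_stk_of_stack by (simp add: subseq_pair_append_iff)
  next
    case (Suc j')
    then have "e \<in> set (stack_after T inp st' j')" "e \<notin> set inp"
      using Cons.prems by (auto simp: st'_def)
    moreover have "set (stack_after T inp st' j') \<subseteq> set st' \<union> set (take (Suc j') inp)"
      using Suc Cons.prems by (intro set_stack_after) auto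
    ultimately have "subseq [inp ! j', e] (stk T inp st')"
      using Cons.IH[OF dist] Suc Cons.prems by (auto dest: in_set_takeD)
    then show ?thesis using Suc out by (simp add: subseq_pair_append_iff)
  qed
qed simp

lemma stk_order_popped_stack_entry:
  "distinct (x @ st) \<Longrightarrow> j < length x \<Longrightarrow> e \<in> set st \<Longrightarrow> e \<notin> set (stack_after T x st j)
    \<Longrightarrow> subseq [e, x ! j] (stk T x st)"
proof (induction x arbitrary: st j)
  case (Cons a inp)
  define st' where "st' = a # drop (pops T a st) st"
  have out: "stk T (a # inp) st = take (pops T a st) st @ stk T inp st'"
    unfolding st'_def by (rule stk_Cons_pops)
  have dist: "distinct (inp @ st')"
    using Cons.prems(1) unfolding st'_def by (auto dest: in_set_dropD simp: distinct_drop)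
  have popped: "e \<in> set (take (pops T a st) st)" if "e \<notin> set st'"
    using Cons.prems(3) that unfolding st'_def
    by (metis Un_iff append_take_drop_id list.set_intros(2) set_append)
  show ?case
  proof (cases "e \<in> set st'")
    case True
    then obtain j' where "j = Suc j'" "subseq [e, inp ! j'] (stk T inp st')"
      using Cons.IH[OF dist] Cons.prems by (cases j) (auto simp: st'_def)
    then show ?thesis using out by (simp add: subseq_pair_append_iff)
  next
    case False
    have "(a # inp) ! j \<in> set inp \<union> set st'"
      using Cons.prems(2) nth_mem[of j "a # inp"] by (auto simp: st'_def)
    then show ?thesis
      using popped[OF False] unfolding out by (auto simp: subseq_pair_append_iff set_stk)
  qed
qed simp

lemma stk_order_input_entries:
  "distinct (x @ st) \<Longrightarrow> i < j \<Longrightarrow> j < length x \<Longrightarrow>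
    (x ! i \<in> set (stack_after T x st j) \<longrightarrow> subseq [x ! j, x ! i] (stk T x st)) \<and>
    (x ! i \<notin> set (stack_after T x st j) \<longrightarrow> subseq [x ! i, x ! j] (stk T x st))"
proof (induction x arbitrary: st i j)
  case (Cons a inp)
  define st' where "st' = a # drop (pops T a st) st"
  have out: "stk T (a # inp) st = take (pops T a st) st @ stk T inp st'"
    unfolding st'_def by (rule stk_Cons_pops)
  have dist: "distinct (inp @ st')"
    using Cons.prems(1) unfolding st'_def by (auto dest: in_set_dropD simp: distinct_drop)
  obtain j' where j: "j = Suc j'" "stack_after T (a # inp) st j = stack_after T inp st' j'"
    using Cons.prems by (cases j) (auto simp: st'_def)
  show ?case
  proof (cases i)
    case 0
    then show ?thesis
      using stk_order_kept_stack_entry[OF dist, of j' a] stk_order_popped_stack_entry[OF dist, of j' a]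
        j out Cons.prems by (auto simp: st'_def subseq_pair_append_iff)
  next
    case (Suc i')
    then show ?thesis
      using Cons.IH[OF dist, of i' j'] j out Cons.prems by (auto simp: subseq_pair_append_iff)
  qed
qed simp

corollary sT_order_kept:
  "distinct x \<Longrightarrow> i < j \<Longrightarrow> j < length x \<Longrightarrow> x ! i \<in> set (stack_after T x [] j)
    \<Longrightarrow> subseq [x ! j, x ! i] (sT T x)"
  using stk_order_input_entries[of x "[]" i j T] by (simp add: sT_def)

corollary sT_order_popped:
  "distinct x \<Longrightarrow> i < j \<Longrightarrow> j < length x \<Longrightarrow> x ! i \<notin> set (stack_after T x [] j)
    \<Longrightarrow> subseq [x ! i, x ! j] (sT T x)"
  using stk_order_input_entries[of x "[]" i j T] by (simp add: sT_def)

lemma avoids_all_short: "\<forall>p\<in>set T. length w < length p \<Longrightarrow> avoids_all T w"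
  unfolding avoids_all_def contains_def by (auto dest: list_emb_length)

lemma avoids_after_pops:
  "\<forall>p\<in>set T. 2 \<le> length p \<Longrightarrow> avoids_all T (a # drop (pops T a st) st)"
  by (induction st) (auto intro!: avoids_all_short)

lemma not_avoids_before_pops: "q < pops T a st \<Longrightarrow> \<not> avoids_all T (a # drop q st)"
proof (induction st arbitrary: q)
  case (Cons b st)
  then show ?case by (cases q) (auto split: if_splits)
qed simp

lemma pops_less_length:
  "st \<noteq> [] \<Longrightarrow> \<forall>p\<in>set T. 3 \<le> length p \<Longrightarrow> pops T a st < length st"
proof (induction st)
  case (Cons b st)
  then show ?case
    by (cases st) (auto intro!: avoids_all_short)
qed simp

lemma stack_after_avoids:
  "\<forall>p\<in>set T. 2 \<le> length p \<Longrightarrow> j < length x \<Longrightarrow> avoids_all T (stack_after T x st j)"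
proof (induction x arbitrary: st j)
  case (Cons a inp)
  then show ?case by (cases j) (auto intro: avoids_after_pops)
qed simp

lemma last_stack_after:
  assumes "\<forall>p\<in>set T. 3 \<le> length p"
  shows "j < length x \<Longrightarrow> last (stack_after T x [] j) = x ! 0"
proof (induction j)
  case 0
  then show ?case by (cases x) auto
next
  case (Suc j)
  have "pops T (x ! Suc j) (stack_after T x [] j) < length (stack_after T x [] j)"
    using Suc.prems stack_after_top[of j x T "[]"] assms by (intro pops_less_length) auto
  then show ?case using Suc stack_after_Suc[of j x T "[]"] by auto
qed

lemma stack_after_index:
  "j < length x \<Longrightarrow> e \<in> set (stack_after T x [] j) \<Longrightarrow> \<exists>i\<le>j. i < length x \<and> x ! i = e"
proof -
  assume "j < length x" "e \<in> set (stack_after T x [] j)"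
  then have "e \<in> set (take (Suc j) x)"
    using set_stack_after[of j x T "[]"] by auto
  then obtain i where "i < length (take (Suc j) x)" "take (Suc j) x ! i = e"
    by (metis in_set_conv_nth)
  then show ?thesis by (intro exI[of _ i]) auto
qed

lemma notin_stack_after_mono:
  assumes "distinct x" "i \<le> j" "j \<le> j'" "j' < length x" "x ! i \<notin> set (stack_after T x st j)"
  shows "x ! i \<notin> set (stack_after T x st j')"
  using assms(3-5)
proof (induction j' rule: dec_induct)
  case (step k)
  have "x ! i \<noteq> x ! Suc k"
    using assms(1,2) step by (simp add: nth_eq_iff_index_eq)
  then show ?case
    using step stack_after_Suc[of k x T st] by (auto dest: in_set_dropD)
qed

lemma stack_after_keeps_below:
  assumes "distinct x" "i \<le> J" "J < length x"
    and "\<And>j. i \<le> j \<Longrightarrow> j \<le> J \<Longrightarrow> x ! i \<in> set (stack_after T x [] j)"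
    and "stack_after T x [] i = x ! i # U"
  shows "\<exists>V. stack_after T x [] J = V @ x ! i # U"
  using assms(2-4)
proof (induction J rule: dec_induct)
  case base
  then show ?case using assms(5) by auto
next
  case (step J)
  then obtain V where V: "stack_after T x [] J = V @ x ! i # U" by auto
  define k where "k = pops T (x ! Suc J) (stack_after T x [] J)"
  have St: "stack_after T x [] (Suc J) = x ! Suc J # drop k (V @ x ! i # U)"
    using stack_after_Suc[of J x T "[]"] step.prems V k_def by simp
  have "x ! i \<noteq> x ! Suc J"
    using assms(1) step by (simp add: nth_eq_iff_index_eq)
  moreover have "x ! i \<in> set (stack_after T x [] (Suc J))"
    using step by simp
  ultimately have kept: "x ! i \<in> set (drop k (V @ x ! i # U))"
    using St by simp
  have "distinct (V @ x ! i # U)"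
    using V distinct_stack_after[of x "[]" J T] assms(1) step by simp
  have "k \<le> length V"
  proof (rule ccontr)
    assume "\<not> k \<le> length V"
    then obtain r where "k = Suc (length V + r)"
      by (metis less_iff_Suc_add not_le)
    then show False
      using kept \<open>distinct (V @ x ! i # U)\<close> by (auto dest: in_set_dropD)
  qed
  then have "stack_after T x [] (Suc J) = (x ! Suc J # drop k V) @ x ! i # U"
    using St by simp
  then show ?case by blast
qed

lemma stack_after_first_pop:
  assumes "distinct x" "q < p" "p < length x"
    and "stack_after T x [] q = x ! q # U" "x ! q \<notin> set (stack_after T x [] p)"
  obtains j r where "q < j" "j \<le> p"
    "\<And>j'. q \<le> j' \<Longrightarrow> j' < j \<Longrightarrow> x ! q \<in> set (stack_after T x [] j')"
    "x ! q \<notin> set (stack_after T x [] j)"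
    "\<not> avoids_all T (x ! j # x ! q # U)"
    "stack_after T x [] j = x ! j # drop r U"
proof -
  obtain j where j: "q < j" "j \<le> p" "x ! q \<notin> set (stack_after T x [] j)"
    and present: "\<And>j'. q \<le> j' \<Longrightarrow> j' < j \<Longrightarrow> x ! q \<in> set (stack_after T x [] j')"
    using first_failure_after[of "\<lambda>j. x ! q \<in> set (stack_after T x [] j)" q p] assms(2,4,5)
    by auto
  obtain j0 where j0: "j = Suc j0"
    using j(1) by (cases j) auto
  obtain V where V: "stack_after T x [] j0 = V @ x ! q # U"
    using stack_after_keeps_below[OF assms(1), of q j0 T U] present assms j j0
    by auto
  define k where "k = pops T (x ! j) (stack_after T x [] j0)"
  have St: "stack_after T x [] j = x ! j # drop k (V @ x ! q # U)"
    using stack_after_Suc[of j0 x T "[]"] j j0 assms(3) by (simp add: V k_def)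
  have "length V < k"
  proof (rule ccontr)
    assume "\<not> length V < k"
    then have "x ! q \<in> set (drop k (V @ x ! q # U))" by auto
    then show False using St j(3) by simp
  qed
  then obtain r where r: "k = Suc (length V + r)"
    using less_iff_Suc_add by auto
  have "\<not> avoids_all T (x ! j # x ! q # U)"
    using not_avoids_before_pops[of "length V" T "x ! j" "stack_after T x [] j0"] \<open>length V < k\<close>
    by (simp add: V k_def)
  moreover have "stack_after T x [] j = x ! j # drop r U"
    using St r by simp
  ultimately show ?thesis
    using that[of j r] present j by blast
qed

section \<open>Stacks avoiding 123 and 321\<close>

definition mono3 :: "nat list list" where
  "mono3 = [[1, 2, 3], [3, 2, 1]]"

lemma avoids_mono3_iff:
  "avoids_all mono3 w \<longleftrightarrow> \<not> (\<exists>u v t. subseq [u, v, t] w \<and> u < v \<and> v < t) \<and>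
     \<not> (\<exists>u v t. subseq [u, v, t] w \<and> t < v \<and> v < u)"
proof -
  have "avoids_all mono3 w \<longleftrightarrow> \<not> contains w [1, 2, 3] \<and> \<not> contains w [3, 2, 1]"
    by (simp add: avoids_all_def mono3_def)
  then show ?thesis
    by (simp only: contains_123 contains_321)
qed

lemma avoids_mono3_Cons:
  "avoids_all mono3 (a # w) \<longleftrightarrow> avoids_all mono3 w \<and>
     (\<forall>v t. subseq [v, t] w \<longrightarrow> \<not> (a < v \<and> v < t) \<and> \<not> (t < v \<and> v < a))"
  unfolding avoids_mono3_iff subseq_triple_Cons_iff by blast

lemma avoids_mono3_short: "length w \<le> 2 \<Longrightarrow> avoids_all mono3 w"
  by (rule avoids_all_short) (auto simp: mono3_def)

lemma avoids_mono3_three: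
  "avoids_all mono3 [a, b, c] \<longleftrightarrow> \<not> (a < b \<and> b < c) \<and> \<not> (c < b \<and> b < a)"
  unfolding avoids_mono3_Cons[of a] by (auto simp: avoids_mono3_short split: if_splits)

lemma avoids_mono3_below_max:
  assumes "\<forall>s\<in>set S. s < n" "distinct S" "avoids_all mono3 (n # S)"
  shows "sorted_wrt (<) S" "length S \<le> 2"
proof -
  show sorted: "sorted_wrt (<) S"
    unfolding sorted_wrt_iff_nth_less
  proof (intro allI impI)
    fix i j assume "i < j" "j < length S"
    then have "subseq [S ! i, S ! j] S" "S ! i < n" "S ! i \<noteq> S ! j"
      using assms(1,2) by (auto simp: subseq_pair_iff_nth nth_eq_iff_index_eq)
    then show "S ! i < S ! j"
      using assms(3) unfolding avoids_mono3_Cons by (meson linorder_neqE_nat)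
  qed
  show "length S \<le> 2"
  proof (rule ccontr)
    assume "\<not> length S \<le> 2"
    then obtain s1 s2 s3 r where S: "S = s1 # s2 # s3 # r"
      by (auto simp: numeral_eq_Suc Suc_le_length_iff not_le Suc_le_eq[symmetric])
    have "avoids_all mono3 S"
      using assms(3) avoids_mono3_Cons by blast
    moreover have "subseq [s1, s2, s3] S" "s1 < s2" "s2 < s3"
      using S sorted by auto
    ultimately show False
      unfolding avoids_mono3_iff by blast
  qed
qed

lemma avoids_mono3_above_min:
  assumes "\<forall>u\<in>set U. m < u" "distinct U" "avoids_all mono3 (m # U)"
  shows "sorted_wrt (>) U" "length U \<le> 2"
proof -
  show sorted: "sorted_wrt (>) U"
    unfolding sorted_wrt_iff_nth_less
  proof (intro allI impI)
    fix i j assume "i < j" "j < length U"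
    then have "subseq [U ! i, U ! j] U" "m < U ! i" "U ! i \<noteq> U ! j"
      using assms(1,2) by (auto simp: subseq_pair_iff_nth nth_eq_iff_index_eq)
    then show "U ! i > U ! j"
      using assms(3) unfolding avoids_mono3_Cons by (meson linorder_neqE_nat)
  qed
  show "length U \<le> 2"
  proof (rule ccontr)
    assume "\<not> length U \<le> 2"
    then obtain u1 u2 u3 r where U: "U = u1 # u2 # u3 # r"
      by (auto simp: numeral_eq_Suc Suc_le_length_iff not_le Suc_le_eq[symmetric])
    have "avoids_all mono3 U"
      using assms(3) avoids_mono3_Cons by blast
    moreover have "subseq [u1, u2, u3] U" "u2 < u1" "u3 < u2"
      using U sorted by auto
    ultimately show False
      unfolding avoids_mono3_iff by blast
  qed
qed

lemma blocked_push_onto_max: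
  assumes "\<forall>s\<in>set S. s < n" "distinct S" "avoids_all mono3 (n # S)"
    and "a < n" "\<not> avoids_all mono3 (a # n # S)"
  obtains s1 s2 where "S = [s1, s2]" "a < s1" "s1 < s2"
proof -
  obtain v t where vt: "subseq [v, t] (n # S)" "a < v \<and> v < t \<or> t < v \<and> v < a"
    using assms(5)[unfolded avoids_mono3_Cons[of a]] assms(3) by blast
  have "subseq [v, t] S"
  proof (rule ccontr)
    assume "\<not> subseq [v, t] S"
    then have "v = n" "t < n"
      using vt(1) assms(1) unfolding subseq_pair_Cons_iff by blast+
    then show False
      using vt(2) assms(4) by auto
  qed
  moreover from this have "v < t"
    by (rule subseq_pair_sorted_wrt[OF avoids_mono3_below_max(1)[OF assms(1-3)]])
  moreover have "S = [v, t]"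
    using subseq_pair_short calculation(1) avoids_mono3_below_max(2)[OF assms(1-3)] .
  ultimately show ?thesis
    using that vt(2) by auto
qed

lemma blocked_push_onto_min:
  assumes "\<forall>u\<in>set U. m < u" "distinct U" "avoids_all mono3 (m # U)"
    and "m < a" "\<not> avoids_all mono3 (a # m # U)"
  obtains u1 u2 where "U = [u1, u2]" "u2 < u1" "u1 < a"
proof -
  obtain v t where vt: "subseq [v, t] (m # U)" "a < v \<and> v < t \<or> t < v \<and> v < a"
    using assms(5)[unfolded avoids_mono3_Cons[of a]] assms(3) by blast
  have "subseq [v, t] U"
  proof (rule ccontr)
    assume "\<not> subseq [v, t] U"
    then have "v = m" "m < t"
      using vt(1) assms(1) unfolding subseq_pair_Cons_iff by blast+
    then show False
      using vt(2) assms(4) by auto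
  qed
  moreover from this have "t < v"
    by (rule subseq_pair_sorted_wrt[OF avoids_mono3_above_min(1)[OF assms(1-3)]])
  moreover have "U = [v, t]"
    using subseq_pair_short calculation(1) avoids_mono3_above_min(2)[OF assms(1-3)] .
  ultimately show ?thesis
    using that vt(2) by auto
qed

section \<open>West-sortable words avoid 231\<close>

lemma stack_after_21_top_le:
  assumes "j < length y" "b \<in> set (stack_after [[2, 1]] y [] j)"
  shows "y ! j \<le> b"
proof (rule ccontr)
  let ?S = "stack_after [[2, 1]] y [] j"
  assume "\<not> y ! j \<le> b"
  have S: "?S = y ! j # tl ?S"
    using stack_after_top[of j y "[[2, 1]]" "[]"] assms(1) by simp
  then have "b \<in> set (tl ?S)"
    using assms(2) \<open>\<not> y ! j \<le> b\<close> by (metis le_refl set_ConsD)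
  then have "subseq [y ! j, b] ?S"
    by (subst S) (simp add: subseq_singleton_left)
  then have "contains ?S [2, 1]"
    unfolding contains_pair
  proof (intro exI conjI)
    show "y ! j < b \<longleftrightarrow> (2::nat) < 1" "b < y ! j \<longleftrightarrow> (1::nat) < 2"
      using \<open>\<not> y ! j \<le> b\<close> by auto
  qed
  moreover have "avoids_all [[2, 1]] ?S"
    using assms(1) by (intro stack_after_avoids) auto
  ultimately show False
    by (simp add: avoids_all_def)
qed

lemma west_sorted_avoids_231:
  assumes "distinct y" "sorted_wrt (<) (west y)"
  shows "\<not> contains y [2, 3, 1]"
proof
  let ?T = "[[2, 1]] :: nat list list"
  assume "contains y [2, 3, 1]"
  then have "\<exists>b c a. subseq [b, c, a] y \<and> a < b \<and> b < c"
    by (simp only: contains_231)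
  then obtain b c a where "subseq [b, c, a] y" "a < b" "b < c"
    by blast
  then have "subseq [b, c] y" "subseq [c, a] y"
    using subseq_triple_iff_pairs[OF assms(1), of b c a] by simp_all
  then obtain ib ic ic' ia where ib: "ib < ic" "ic < length y" "y ! ib = b" "y ! ic = c"
    and ia: "ic' < ia" "ia < length y" "y ! ic' = c" "y ! ia = a"
    unfolding subseq_pair_iff_nth by blast
  have "ic' = ic"
    using ib ia nth_eq_iff_index_eq[OF assms(1), of ic' ic] by simp
  then have idx: "ib < ic" "ic < ia" "ia < length y" "y ! ib = b" "y ! ic = c" "y ! ia = a"
    using ib ia by auto
  have "b \<notin> set (stack_after ?T y [] ic)"
    using stack_after_21_top_le[of ic y b] idx \<open>b < c\<close> by auto
  then have "b \<notin> set (stack_after ?T y [] ia)"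
    using notin_stack_after_mono[OF assms(1), of ib ic ia ?T "[]"] idx by simp
  then have "subseq [b, a] (west y)"
    using sT_order_popped[OF assms(1), of ib ia ?T] idx unfolding west_def by simp
  then have "b < a"
    by (rule subseq_pair_sorted_wrt[OF assms(2)])
  with \<open>a < b\<close> show False
    by simp
qed

section \<open>Permutations in Sort_n(123, 321)\<close>

lemma prefix_length_le_Suc_card:
  assumes "distinct x" "j \<le> length x" "p < j" "finite A" "\<forall>i<j. i \<noteq> p \<longrightarrow> x ! i \<in> A"
  shows "j \<le> Suc (card A)"
proof -
  have "inj_on (nth x) ({..<j} - {p})"
    using assms(1,2) by (auto intro!: inj_onI simp: nth_eq_iff_index_eq)
  moreover have "nth x ` ({..<j} - {p}) \<subseteq> A"
    using assms(5) by auto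
  ultimately have "card ({..<j} - {p}) \<le> card A"
    using assms(4) by (meson card_inj_on_le)
  then show ?thesis
    using assms(3) by simp
qed

lemma ind_nth: "distinct x \<Longrightarrow> i < length x \<Longrightarrow> ind x (x ! i) = i"
  unfolding ind_def by (rule the_equality) (auto simp: nth_eq_iff_index_eq)

locale output_avoids_231 =
  fixes n :: nat and x :: "nat list"
  assumes perm: "is_perm n x"
    and avoids_231: "\<not> contains (sT mono3 x) [2, 3, 1]"
begin

abbreviation stack :: "nat \<Rightarrow> nat list" where
  "stack j \<equiv> stack_after mono3 x [] j"

lemma distinct_input: "distinct x"
  using perm by (simp add: is_perm_def)

lemma length_input: "length x = n"
  using perm distinct_card[of x] by (simp add: is_perm_def)

lemma input_bounds: "i < n \<Longrightarrow> 1 \<le> x ! i \<and> x ! i \<le> n"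
  using perm length_input nth_mem[of i x] by (auto simp: is_perm_def)

lemma input_index: "1 \<le> v \<Longrightarrow> v \<le> n \<Longrightarrow> \<exists>i<n. x ! i = v"
  using perm length_input by (auto simp: is_perm_def in_set_conv_nth)

lemma input_eq_iff: "i < n \<Longrightarrow> j < n \<Longrightarrow> x ! i = x ! j \<longleftrightarrow> i = j"
  using distinct_input length_input by (simp add: nth_eq_iff_index_eq)

lemma no_231:
  assumes "subseq [b, c] (sT mono3 x)" "subseq [c, a] (sT mono3 x)" "a < b" "b < c"
  shows False
proof -
  have "distinct (sT mono3 x)"
    using distinct_input by (simp add: sT_def distinct_stk)
  then have "subseq [b, c, a] (sT mono3 x)"
    using subseq_triple_iff_pairs[of _ b c a] assms(1,2) by simp
  then have "\<exists>b c a. subseq [b, c, a] (sT mono3 x) \<and> a < b \<and> b < c"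
    using assms(3,4) by blast
  then have "contains (sT mono3 x) [2, 3, 1]"
    by (simp only: contains_231)
  then show False
    using avoids_231 by contradiction
qed

lemma stack_top: "j < n \<Longrightarrow> stack j = x ! j # tl (stack j)"
  using stack_after_top length_input by simp

lemma distinct_stack: "j < n \<Longrightarrow> distinct (stack j)"
  using distinct_stack_after[of x "[]" j mono3] distinct_input length_input by simp

lemma stack_avoids: "j < n \<Longrightarrow> avoids_all mono3 (stack j)"
  using stack_after_avoids[of mono3 j x "[]"] length_input by (simp add: mono3_def)

lemma stack_bottom: "j < n \<Longrightarrow> last (stack j) = x ! 0"
  using last_stack_after[of mono3 j x] length_input by (simp add: mono3_def)

lemma stack_entry_index: "j < n \<Longrightarrow> e \<in> set (stack j) \<Longrightarrow> \<exists>i\<le>j. x ! i = e"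
  using stack_after_index[of j x e mono3] length_input by auto

lemma output_order_kept:
  "i < j \<Longrightarrow> j < n \<Longrightarrow> x ! i \<in> set (stack j) \<Longrightarrow> subseq [x ! j, x ! i] (sT mono3 x)"
  using sT_order_kept[OF distinct_input] length_input by simp

lemma output_order_popped:
  "i < j \<Longrightarrow> j < n \<Longrightarrow> x ! i \<notin> set (stack j) \<Longrightarrow> subseq [x ! i, x ! j] (sT mono3 x)"
  using sT_order_popped[OF distinct_input] length_input by simp

lemma entries_below_prefix_min:
  assumes "q < n" "\<And>i. i < q \<Longrightarrow> x ! q < x ! i" "stack q = x ! q # U" "u \<in> set U"
  shows "x ! q < u"
proof -
  have "u \<in> set (stack q)" "u \<noteq> x ! q"
    using assms(3,4) distinct_stack[OF assms(1)] by auto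
  then obtain i where "i \<le> q" "x ! i = u"
    using stack_entry_index[OF assms(1)] by blast
  moreover have "i \<noteq> q"
    using calculation \<open>u \<noteq> x ! q\<close> by auto
  ultimately show ?thesis
    using assms(2) by auto
qed

lemma popped_prefix_min:
  assumes "q < p" "p < n" "\<forall>i\<le>p. i \<noteq> q \<longrightarrow> x ! q < x ! i" "x ! q \<notin> set (stack p)"
  obtains u1 u2 where "stack q = [x ! q, u1, u2]" "u2 < u1" "u1 < n" "u1 \<notin> set (stack p)"
proof -
  define U where "U = tl (stack q)"
  have q: "q < n"
    using assms(1,2) by simp
  have stack_q: "stack q = x ! q # U"
    using stack_top[OF q] by (simp add: U_def)
  have dist: "distinct (x ! q # U)" and avoids: "avoids_all mono3 (x ! q # U)"
    using distinct_stack[OF q] stack_avoids[OF q] stack_q by simp_all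
  have "x ! q < x ! i" if "i < q" for i
    using assms(1,3) that by auto
  then have above: "\<forall>u\<in>set U. x ! q < u"
    using entries_below_prefix_min[OF q _ stack_q] by blast
  obtain j r where j: "q < j" "j \<le> p" "\<not> avoids_all mono3 (x ! j # x ! q # U)"
    "stack j = x ! j # drop r U"
    using stack_after_first_pop[OF distinct_input assms(1) _ stack_q assms(4)] assms(2) length_input
    by (metis (no_types, lifting))
  have j_n: "j < n" and "x ! q < x ! j"
    using j(1,2) assms(2,3) by simp_all
  then obtain u1 u2 where U: "U = [u1, u2]" "u2 < u1" "u1 < x ! j"
    using blocked_push_onto_min[OF above _ avoids _ j(3)] dist by auto
  have "u1 \<notin> set (stack j)"
  proof
    assume "u1 \<in> set (stack j)"
    then have "stack j = [x ! j, u1, u2]"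
      using j(4) U by (cases r) (auto dest: in_set_dropD)
    then show False
      using stack_avoids[OF j_n] U(2,3) by (simp add: avoids_mono3_three)
  qed
  moreover obtain i1 where "i1 \<le> q" "x ! i1 = u1"
    using stack_entry_index[OF q] stack_q U(1) by auto
  ultimately have "u1 \<notin> set (stack p)"
    using notin_stack_after_mono[OF distinct_input, of i1 j p] j(1,2) assms(2) length_input by auto
  moreover have "u1 < n"
    using U(3) input_bounds[OF j_n] by simp
  ultimately show ?thesis
    using that stack_q U by blast
qed

lemma prefix_min_survives_until_max:
  assumes "q < p" "p < n" "x ! p = n" "\<forall>i\<le>p. i \<noteq> q \<longrightarrow> x ! q < x ! i"
  shows "x ! q \<in> set (stack p)"
proof (rule ccontr)
  assume "x ! q \<notin> set (stack p)"
  then obtain u1 u2 where u: "stack q = [x ! q, u1, u2]" "u2 < u1" "u1 < n" "u1 \<notin> set (stack p)"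
    using popped_prefix_min assms by blast
  obtain i1 where "i1 \<le> q" "x ! i1 = u1"
    using stack_entry_index[of q u1] u(1) assms(1,2) by auto
  then have "subseq [u1, n] (sT mono3 x)"
    using output_order_popped[of i1 p] u(4) assms by auto
  moreover have "u2 = x ! 0"
    using stack_bottom[of q] u(1) assms(1,2) by simp
  then have "subseq [n, u2] (sT mono3 x)"
    using output_order_kept[of 0 p] stack_bottom[of p] stack_top[of p] assms
    by (metis last_in_set list.distinct(1) gr_zeroI not_less0)
  ultimately show False
    using no_231 u(2,3) by blast
qed

lemma stack_at_max:
  assumes "p < n" "x ! p = n" "stack p = n # R"
  shows "\<forall>s\<in>set R. s < n" "distinct R" "avoids_all mono3 (n # R)"
proof -
  have dist: "distinct (n # R)"
    using distinct_stack[OF assms(1)] assms(3) by simp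
  show "\<forall>s\<in>set R. s < n"
  proof
    fix s assume "s \<in> set R"
    then obtain i where "i \<le> p" "x ! i = s"
      using stack_entry_index[OF assms(1)] assms(3) by auto
    moreover have "s \<noteq> n"
      using dist \<open>s \<in> set R\<close> by auto
    ultimately show "s < n"
      using input_bounds[of i] assms(1) by fastforce
  qed
  show "distinct R" "avoids_all mono3 (n # R)"
    using dist stack_avoids[OF assms(1)] assms(3) by simp_all
qed

lemma precedes_max:
  assumes "p < n" "x ! p = n" "stack p = n # R" "i < n" "i \<noteq> p" "x ! i \<notin> set R"
    and "i < p \<or> n \<in> set (stack i)"
  shows "subseq [x ! i, n] (sT mono3 x)"
proof (cases "i < p")
  case True
  have "x ! i \<noteq> n"
    using input_eq_iff[of i p] assms(1,2,4,5) by simp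
  then have "x ! i \<notin> set (stack p)"
    using assms(3,6) by simp
  then show ?thesis
    using output_order_popped[of i p] True assms(1,2) by simp
next
  case False
  then have "p < i" "n \<in> set (stack i)"
    using assms(5,7) by auto
  then show ?thesis
    using output_order_kept[of p i] assms(2,4) by simp
qed

lemma max_kept_impossible:
  assumes "5 \<le> n" "p < n" "x ! p = n" "stack p = n # R" "m \<in> set R" "m \<le> 2"
    and "\<And>i. p < i \<Longrightarrow> i < n \<Longrightarrow> n \<in> set (stack i)"
  shows False
proof -
  have "length R \<le> 2"
    using avoids_mono3_below_max(2)[OF stack_at_max[OF assms(2-4)]] .
  then have "card (set R) < card {2..<n}"
    using assms(1) card_length[of R] by simp
  then obtain e where e: "2 \<le> e" "e < n" "e \<notin> set R"
    by (metis atLeastLessThan_iff card_mono finite_set not_le subsetI)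
  then obtain i where i: "i < n" "x ! i = e"
    using input_index[of e] by auto
  have "i \<noteq> p"
    using i e(2) assms(3) by auto
  then have "subseq [e, n] (sT mono3 x)"
    using precedes_max[OF assms(2-4) i(1)] assms(7)[of i] i e(3) by fastforce
  moreover obtain im where "im \<le> p" "x ! im = m"
    using stack_entry_index[OF assms(2)] assms(4,5) by auto
  then have "subseq [n, m] (sT mono3 x)"
    using output_order_kept[of im p] assms by (cases "im = p") auto
  moreover have "m < e"
    using e assms(5,6) by (cases "m = e") auto
  ultimately show False
    using no_231 e(2) by blast
qed

lemma max_popped_by_one:
  assumes "p < n" "x ! p = n" "stack p = n # R" "m \<in> set R" "m \<le> 2"
    and "p < i" "i < n" "n \<notin> set (stack i)"
  obtains j s where "p < j" "j < n" "x ! j = 1" "R = [2, s]" "2 < s"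
    "\<And>j'. p \<le> j' \<Longrightarrow> j' < j \<Longrightarrow> n \<in> set (stack j')" "n \<notin> set (stack j)"
    "stack j = [1] \<or> stack j = [1, s]"
proof -
  note R = stack_at_max[OF assms(1-3)]
  obtain j r where j: "p < j" "j \<le> i" "\<And>j'. p \<le> j' \<Longrightarrow> j' < j \<Longrightarrow> n \<in> set (stack j')"
    "n \<notin> set (stack j)" "\<not> avoids_all mono3 (x ! j # n # R)" "stack j = x ! j # drop r R"
    using stack_after_first_pop[OF distinct_input assms(6), of mono3 R] assms(2,3,7,8) length_input
    by (metis (no_types, lifting))
  have j_n: "j < n"
    using j(2) assms(7) by simp
  have "x ! j \<noteq> n"
    using input_eq_iff[of j p] j(1) j_n assms(1,2) by simp
  then have "x ! j < n"
    using input_bounds[OF j_n] by simp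
  then obtain s1 s where R2: "R = [s1, s]" "x ! j < s1" "s1 < s"
    using blocked_push_onto_max[OF R _ j(5)] by blast
  then have "x ! j = 1" "s1 = 2"
    using assms(4,5) input_bounds[OF j_n] by auto
  moreover have "r \<noteq> 0"
  proof
    assume "r = 0"
    then have "stack j = [1, 2, s]"
      using j(6) R2 \<open>x ! j = 1\<close> \<open>s1 = 2\<close> by simp
    then show False
      using stack_avoids[OF j_n] R2(3) \<open>s1 = 2\<close> by (simp add: avoids_mono3_three)
  qed
  then have "stack j = [1] \<or> stack j = [1, s]"
    using j(6) R2(1) \<open>x ! j = 1\<close> by (cases r; cases "r - 1") auto
  ultimately show ?thesis
    using that j(1,3,4) j_n R2 by blast
qed

lemma entries_before_popped_max:
  assumes "p < n" "x ! p = n" "stack p = [n, 2, s]" "p < j" "j < n" "x ! j = 1"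
    and "\<And>j'. p \<le> j' \<Longrightarrow> j' < j \<Longrightarrow> n \<in> set (stack j')" "n \<notin> set (stack j)"
  shows "j \<le> 3"
proof -
  have n_1: "subseq [n, 1] (sT mono3 x)"
    using output_order_popped[of p j] assms by simp
  have "x ! k \<in> {2, s}" if "k < j" "k \<noteq> p" for k
  proof (rule ccontr)
    assume "x ! k \<notin> {2, s}"
    then have "subseq [x ! k, n] (sT mono3 x)"
      using precedes_max[OF assms(1,2,3), of k] assms(5,7) that by fastforce
    moreover have "x ! k \<noteq> 1" "x ! k \<noteq> n"
      using input_eq_iff[of k j] input_eq_iff[of k p] that assms(1,2,5,6) by auto
    then have "1 < x ! k" "x ! k < n"
      using input_bounds[of k] that assms(5) by fastforce+
    ultimately show False
      using no_231 n_1 by blast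
  qed
  then have "j \<le> Suc (card {2, s})"
    using prefix_length_le_Suc_card[OF distinct_input, of j p "{2, s}"] assms(4,5) length_input by simp
  also have "\<dots> \<le> 3"
    by (simp add: card_insert_if)
  finally show ?thesis .
qed

lemma max_popped_impossible:
  assumes "5 \<le> n" "p < n" "x ! p = n" "stack p = n # R" "m \<in> set R" "m \<le> 2"
    and "p < i" "i < n" "n \<notin> set (stack i)"
  shows False
proof -
  obtain j s where j: "p < j" "j < n" "x ! j = 1" "R = [2, s]" "2 < s"
    "\<And>j'. p \<le> j' \<Longrightarrow> j' < j \<Longrightarrow> n \<in> set (stack j')" "n \<notin> set (stack j)"
    and stack_j: "stack j = [1] \<or> stack j = [1, s]"
    using max_popped_by_one[OF assms(2-9)] by blast
  have "j \<le> 3"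
    using entries_before_popped_max[OF assms(2,3), of s j] assms(4) j by simp
  then have Sj: "Suc j < n"
    using assms(1) by simp
  define c where "c = x ! Suc j"
  obtain i2 where i2: "i2 \<le> p" "x ! i2 = 2"
    using stack_entry_index[OF assms(2)] assms(4) j(4) by auto
  have "c \<noteq> 1" "c \<noteq> 2"
    using input_eq_iff[of "Suc j" j] input_eq_iff[of "Suc j" i2] i2 j(1,3) Sj assms(2)
    unfolding c_def by auto
  then have "2 < c"
    using input_bounds[OF Sj] unfolding c_def by auto
  then have "avoids_all mono3 (c # stack j)"
    using stack_j j(5) by (auto simp: avoids_mono3_three avoids_mono3_short)
  then have stack_Sj: "stack (Suc j) = c # stack j"
    using stack_after_Suc[of j x mono3 "[]"] Sj length_input pops_eq_0 unfolding c_def by simp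
  have "subseq [c, 1] (sT mono3 x)"
    using output_order_kept[of j "Suc j"] Sj stack_Sj stack_j j(3) unfolding c_def by auto
  moreover have "2 \<notin> set (stack (Suc j))"
    using stack_Sj stack_j \<open>2 < c\<close> j(5) by auto
  then have "subseq [2, c] (sT mono3 x)"
    using output_order_popped[of i2 "Suc j"] i2 j(1) Sj unfolding c_def by simp
  ultimately show False
    using no_231[of 2 c 1] \<open>2 < c\<close> by simp
qed

lemma small_not_below_max:
  assumes "5 \<le> n" "p < n" "x ! p = n" "m \<le> 2"
  shows "m \<notin> set (stack p)"
proof
  assume "m \<in> set (stack p)"
  define R where "R = tl (stack p)"
  have stack_p: "stack p = n # R"
    using stack_top[OF assms(2)] assms(3) by (simp add: R_def)
  then have "m \<in> set R"
    using \<open>m \<in> set (stack p)\<close> assms(1,4) by auto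
  show False
  proof (cases "\<forall>i. p < i \<and> i < n \<longrightarrow> n \<in> set (stack i)")
    case True
    then show False
      using max_kept_impossible[OF assms(1-3) stack_p \<open>m \<in> set R\<close> assms(4)] by blast
  next
    case False
    then show False
      using max_popped_impossible[OF assms(1-3) stack_p \<open>m \<in> set R\<close> assms(4)] by blast
  qed
qed

lemma max_left_of_small:
  assumes "5 \<le> n" "p < n" "x ! p = n" "i1 < n" "x ! i1 = 1" "i2 < n" "x ! i2 = 2"
  shows "p < i1" "p < i2"
proof -
  have no_small_prefix_min: False
    if "q < p" "x ! q \<le> 2" "\<forall>i\<le>p. i \<noteq> q \<longrightarrow> x ! q < x ! i" for q
    using prefix_min_survives_until_max[OF that(1) assms(2,3) that(3)]
      small_not_below_max[OF assms(1-3) that(2)] by blast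
  have "i1 \<noteq> p" "i2 \<noteq> p"
    using assms by auto
  moreover have "\<not> i1 < p"
  proof
    assume "i1 < p"
    moreover have "1 < x ! i" if "i \<le> p" "i \<noteq> i1" for i
    proof -
      have "i < n" "x ! i \<noteq> 1"
        using that assms(2,4,5) input_eq_iff[of i i1] by auto
      then show ?thesis
        using input_bounds[of i] by fastforce
    qed
    ultimately show False
      using no_small_prefix_min[of i1] assms(5) by simp
  qed
  moreover have "\<not> i2 < p"
  proof
    assume "i2 < p"
    moreover have "2 < x ! i" if "i \<le> p" "i \<noteq> i2" for i
    proof -
      have "i < n" "x ! i \<noteq> 2" "x ! i \<noteq> 1"
        using that assms(2,4-7) input_eq_iff[of i i2] input_eq_iff[of i i1]
          \<open>i1 \<noteq> p\<close> \<open>\<not> i1 < p\<close> by auto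
      then show ?thesis
        using input_bounds[of i] by fastforce
    qed
    ultimately show False
      using no_small_prefix_min[of i2] assms(7) by simp
  qed
  ultimately show "p < i1" "p < i2"
    by simp_all
qed

end

theorem lemma4p4:
  fixes n :: nat and x :: "nat list"
  assumes "n \<ge> 5"
    and "x \<in> Sort n [1,2,3] [3,2,1]"
  shows "ind x n < min (ind x 1) (ind x 2)"
proof -
  have perm: "is_perm n x" and sortable: "west (sT mono3 x) = [1..<n+1]"
    using assms(2) by (simp_all add: Sort_def mono3_def)
  have sorted: "sorted_wrt (<) (west (sT mono3 x))"
    unfolding sortable by (rule sorted_wrt_upt)
  have "distinct (sT mono3 x)"
    using perm by (simp add: is_perm_def sT_def distinct_stk)
  then interpret output_avoids_231 n x
    using perm west_sorted_avoids_231 sorted by unfold_locales blast+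
  obtain p i1 i2 where pos: "p < n" "x ! p = n" "i1 < n" "x ! i1 = 1" "i2 < n" "x ! i2 = 2"
    using input_index[of n] input_index[of 1] input_index[of 2] assms(1) by auto
  then have "ind x n = p" "ind x 1 = i1" "ind x 2 = i2"
    using ind_nth[OF distinct_input, of p] ind_nth[OF distinct_input, of i1]
      ind_nth[OF distinct_input, of i2] length_input by simp_all
  moreover have "p < i1" "p < i2"
    using max_left_of_small[OF assms(1) pos] by simp_all
  ultimately show ?thesis
    by simp
qed

end
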